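(* Let $(x_n)$ be a nonincreasing interval-filling sequence of positive reals with cardinal function $f$. Then $\mathrm{rng}(f)=\{1,2\}$ if and only if there exists $c>0$ such that $x_n=c/2^n$ for every $n\in\mathbb{N}$.
   Context: For a summable sequence $\mathbf{x}=(x_n)$ of positive reals, $\mathcal{A}(\mathbf{x})=\{\sum_{n\in A}x_n: A\subseteq\mathbb{N}\}$ is its achievement set and its cardinal function $f$ assigns to $x\in\mathcal{A}(\mathbf{x})$ the cardinality (a positive integer, $\omega$, or $\mathfrak{c}$) of $\{(\varepsilon_n)\in\{0,1\}^{\mathbb{N}}:\sum\varepsilon_nx_n=x\}$. The sequence is interval-filling if $\mathcal{A}(\mathbf{x})$ is an interval. *)

theory Defs
  imports "HOL-Analysis.Analysis" "HOL-Library.Extended_Nat"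
begin

text \<open>Subsums: the sum of x over an index set A (a 0/1 sequence is identified with
  the set of indices where it equals 1).\<close>
definition representations :: "(nat \<Rightarrow> real) \<Rightarrow> real \<Rightarrow> nat set set" where
  "representations x p = {A. (\<lambda>n. if n \<in> A then x n else 0) sums p}"

definition achievement_set :: "(nat \<Rightarrow> real) \<Rightarrow> real set" where
  "achievement_set x = {p. \<exists>A. (\<lambda>n. if n \<in> A then x n else 0) sums p}"

text \<open>Cardinal function; infinite cardinalities (omega, continuum) are collapsed to
  \<infinity>, which is harmless for statements about finite values.\<close>
definition cardinal_function :: "(nat \<Rightarrow> real) \<Rightarrow> real \<Rightarrow> enat" where
  "cardinal_function x p =
     (if finite (representations x p) then enat (card (representations x p)) else \<infinity>)"

definition interval_filling :: "(nat \<Rightarrow> real) \<Rightarrow> bool" where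
  "interval_filling x \<longleftrightarrow> is_interval (achievement_set x)"

end

theory Submission
  imports Defs
begin

text \<open>An interval-filling nonincreasing sequence satisfies Kakeya's inequality
  \<open>x n \<le> (\<Sum>k>n. x k)\<close>, so by the greedy algorithm every point below a tail sum is a subsum of
  that tail. If the inequality is strict at some \<open>n\<close>, then for a large \<open>m\<close> the point
  \<open>x n + x m\<close> has three representations: \<open>{n, m}\<close>, \<open>n\<close> together with a representation
  of \<open>x m\<close> beyond \<open>m\<close>, and a representation inside the tail after \<open>n\<close>. Equality for all
  \<open>n\<close> means \<open>x n = 2 x (n + 1)\<close>, i.e. \<open>x n = c / 2\<^sup>n\<close>. Conversely, in that case two distinct
  representations of a point first differ at some \<open>n\<close>, after which one of them stops and
  the other contains the whole tail; so a point has at most one finite and at most one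
  infinite representation, while \<open>0\<close> has exactly one and \<open>x 0\<close> exactly two.\<close>

definition subsum :: "(nat \<Rightarrow> real) \<Rightarrow> nat set \<Rightarrow> real" where
  "subsum x A = (\<Sum>n. if n \<in> A then x n else 0)"

lemma cardinal_function_le_enat_iff:
  "cardinal_function x p \<le> enat k \<longleftrightarrow> finite (representations x p) \<and> card (representations x p) \<le> k"
  by (simp add: cardinal_function_def)

locale pos_summable =
  fixes x :: "nat \<Rightarrow> real"
  assumes pos: "\<And>n. x n > 0" and summable: "summable x"
begin

lemma summable_restrict: "summable (\<lambda>n. if n \<in> A then x n else 0)"
  by (rule summable_comparison_test[OF _ summable]) (auto simp: less_imp_le[OF pos])

lemma sums_subsum: "(\<lambda>n. if n \<in> A then x n else 0) sums subsum x A"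
  unfolding subsum_def using summable_restrict by (rule summable_sums)

lemma mem_representations_iff: "A \<in> representations x p \<longleftrightarrow> subsum x A = p"
  unfolding representations_def using sums_subsum sums_unique2 by blast

lemma achievement_set_eq_range: "achievement_set x = range (subsum x)"
  unfolding achievement_set_def using sums_subsum sums_unique2 by blast

lemma subsum_nonneg: "0 \<le> subsum x A"
  unfolding subsum_def
  by (rule suminf_nonneg[OF summable_restrict]) (auto simp: less_imp_le[OF pos])

lemma subsum_mono: "A \<subseteq> B \<Longrightarrow> subsum x A \<le> subsum x B"
  unfolding subsum_def
  by (rule suminf_le[OF _ summable_restrict summable_restrict]) (auto simp: less_imp_le[OF pos])

lemma subsum_Un_disjoint: "A \<inter> B = {} \<Longrightarrow> subsum x (A \<union> B) = subsum x A + subsum x B"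
  unfolding subsum_def
  by (subst suminf_add[OF summable_restrict summable_restrict]) (auto intro!: suminf_cong)

lemma subsum_finite: "finite A \<Longrightarrow> subsum x A = sum x A"
  using sums_unique2[OF sums_subsum sums_finite[of A "\<lambda>n. if n \<in> A then x n else 0"]] by simp

lemma subsum_empty [simp]: "subsum x {} = 0"
  by (simp add: subsum_finite)

lemma subsum_singleton [simp]: "subsum x {k} = x k"
  by (simp add: subsum_finite)

lemma subsum_insert: "k \<notin> A \<Longrightarrow> subsum x (insert k A) = x k + subsum x A"
  using subsum_Un_disjoint[of "{k}" A] by simp

lemma subsum_eq_0_iff: "subsum x A = 0 \<longleftrightarrow> A = {}"
  using subsum_mono[of "{_}" A] pos by (fastforce simp: less_le_not_le)

lemma interval_filling_imp_le_subsum_Ioi: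
  assumes dec: "decseq x" and fill: "interval_filling x"
  shows "x n \<le> subsum x {n<..}"
proof (rule ccontr)
  assume "\<not> ?thesis"
  then have gap: "subsum x {n<..} < x n" by simp
  \<comment> \<open>\<open>t\<close> lies in a gap no subsum can hit: it is too small once an index \<open>\<le> n\<close> is used.\<close>
  define t where "t = (subsum x {n<..} + x n) / 2"
  have "is_interval (range (subsum x))"
    using fill by (simp add: interval_filling_def achievement_set_eq_range)
  moreover have "subsum x {} \<le> t" "t \<le> subsum x {n}"
    using gap subsum_nonneg[of "{n<..}"] by (auto simp: t_def)
  ultimately have "t \<in> range (subsum x)"
    unfolding is_interval_1 by blast
  then obtain A where A: "subsum x A = t" by auto
  show False
  proof (cases "\<exists>k\<in>A. k \<le> n")
    case True
    then obtain k where "k \<in> A" "k \<le> n" by auto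
    then have "x n \<le> subsum x A"
      using subsum_mono[of "{k}" A] decseqD[OF dec, of k n] by simp
    then show False using A gap by (simp add: t_def)
  next
    case False
    then have "subsum x A \<le> subsum x {n<..}" by (intro subsum_mono) auto
    then show False using A gap by (simp add: t_def)
  qed
qed

lemma greedy_subset_exists:
  assumes "0 \<le> q"
  shows "\<exists>A\<subseteq>{m..}. subsum x A \<le> q \<and> (\<forall>n\<ge>m. n \<notin> A \<longrightarrow> q < subsum x (A \<inter> {..<n}) + x n)"
proof -
  define s where "s = rec_nat 0 (\<lambda>n v. if m \<le> n \<and> v + x n \<le> q then v + x n else v)"
  have s_Suc: "s (Suc n) = (if m \<le> n \<and> s n + x n \<le> q then s n + x n else s n)" for n
    by (simp add: s_def)
  define A where "A = {n. m \<le> n \<and> s n + x n \<le> q}"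
  have s_eq: "s n = sum x (A \<inter> {..<n})" for n
  proof (induction n)
    case 0
    then show ?case by (simp add: s_def)
  next
    case (Suc n)
    then show ?case
      by (cases "n \<in> A") (auto simp: s_Suc A_def lessThan_Suc insert_absorb Int_insert_right)
  qed
  have s_le: "s n \<le> q" for n
    by (induction n) (auto simp: s_Suc s_def assms)
  have "(\<Sum>k<n. if k \<in> A then x k else 0) = s n" for n
    by (simp add: s_eq sum.If_cases Int_commute)
  then have "subsum x A \<le> q"
    unfolding subsum_def using suminf_le_const[OF summable_restrict] s_le by metis
  moreover have "q < subsum x (A \<inter> {..<n}) + x n" if "m \<le> n" "n \<notin> A" for n
    using that s_eq[of n] by (simp add: A_def subsum_finite)
  moreover have "A \<subseteq> {m..}" by (auto simp: A_def)
  ultimately show ?thesis by blast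
qed

lemma greedy_subsum_eq:
  assumes kakeya: "\<And>k. m \<le> k \<Longrightarrow> x k \<le> subsum x {k<..}"
    and q_le: "q \<le> subsum x {m..}"
    and A: "A \<subseteq> {m..}" "subsum x A \<le> q"
    and rejected: "\<And>n. m \<le> n \<Longrightarrow> n \<notin> A \<Longrightarrow> q < subsum x (A \<inter> {..<n}) + x n"
  shows "subsum x A = q"
proof (rule ccontr)
  \<comment> \<open>A shortfall forces all late indices into \<open>A\<close>; at the last rejected index \<open>K\<close>,
    Kakeya's inequality says the tail after \<open>K\<close> already makes up for \<open>x K\<close>.\<close>
  assume "subsum x A \<noteq> q"
  with A have lt: "subsum x A < q" by simp
  obtain N where N: "\<And>n. N \<le> n \<Longrightarrow> x n < q - subsum x A"
    using order_tendstoD(2)[OF summable_LIMSEQ_zero[OF summable], of "q - subsum x A"] lt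
    by (auto simp: eventually_sequentially)
  define E where "E = {m..} - A"
  have "E \<subseteq> {..<N}"
  proof
    fix n assume "n \<in> E"
    then have "q < subsum x (A \<inter> {..<n}) + x n" using rejected by (simp add: E_def)
    moreover have "subsum x (A \<inter> {..<n}) \<le> subsum x A" by (rule subsum_mono) auto
    ultimately show "n \<in> {..<N}" using N[of n] by force
  qed
  then have "finite E" by (rule finite_subset) simp
  have "E \<noteq> {}"
  proof
    assume "E = {}"
    then have "A = {m..}" using A by (auto simp: E_def)
    then show False using lt q_le by simp
  qed
  define K where "K = Max E"
  have "K \<in> E" using \<open>finite E\<close> \<open>E \<noteq> {}\<close> by (simp add: K_def)
  have tail: "{K<..} \<subseteq> A"
  proof
    fix n assume "n \<in> {K<..}"
    then have "n \<notin> E" using Max_ge[OF \<open>finite E\<close>, of n] by (auto simp: K_def)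
    moreover have "m \<le> n" using \<open>K \<in> E\<close> \<open>n \<in> {K<..}\<close> by (simp add: E_def)
    ultimately show "n \<in> A" by (simp add: E_def)
  qed
  have "q < subsum x (A \<inter> {..<K}) + x K" using rejected \<open>K \<in> E\<close> by (simp add: E_def)
  also have "\<dots> \<le> subsum x (A \<inter> {..<K}) + subsum x {K<..}"
    using kakeya \<open>K \<in> E\<close> by (simp add: E_def)
  also have "\<dots> = subsum x ((A \<inter> {..<K}) \<union> {K<..})"
    by (rule subsum_Un_disjoint[symmetric]) auto
  also have "\<dots> \<le> subsum x A"
    using tail by (intro subsum_mono) auto
  finally show False using A by simp
qed

lemma subsum_tail_surj:
  assumes kakeya: "\<And>k. m \<le> k \<Longrightarrow> x k \<le> subsum x {k<..}"
    and "0 \<le> q" "q \<le> subsum x {m..}"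
  obtains A where "A \<subseteq> {m..}" "subsum x A = q"
  using greedy_subset_exists[OF \<open>0 \<le> q\<close>, of m] greedy_subsum_eq[OF kakeya \<open>q \<le> _\<close>] by blast

lemma cardinal_function_nonzero: "p \<in> achievement_set x \<Longrightarrow> cardinal_function x p \<noteq> 0"
  by (auto simp: cardinal_function_def zero_enat_def achievement_set_eq_range mem_representations_iff)

lemma cardinal_function_0: "cardinal_function x 0 = 1"
proof -
  have "representations x 0 = {{}}"
    by (auto simp: mem_representations_iff subsum_eq_0_iff)
  then show ?thesis by (simp add: cardinal_function_def one_enat_def)
qed

lemma subsum_Ioi_eq_if_cardinal_function_le_2:
  assumes dec: "decseq x" and fill: "interval_filling x"
    and card_le_2: "\<And>p. p \<in> achievement_set x \<Longrightarrow> cardinal_function x p \<le> 2"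
  shows "x n = subsum x {n<..}"
proof (rule ccontr)
  assume "x n \<noteq> subsum x {n<..}"
  have kakeya: "\<And>k. x k \<le> subsum x {k<..}"
    using interval_filling_imp_le_subsum_Ioi[OF dec fill] .
  have Suc_tail: "{Suc k..} = {k<..}" for k by auto
  have lt: "x n < subsum x {n<..}"
    using kakeya[of n] \<open>x n \<noteq> subsum x {n<..}\<close> by simp
  obtain m where "n < m" and small: "x m < subsum x {n<..} - x n"
  proof -
    obtain N where "\<And>k. N \<le> k \<Longrightarrow> x k < subsum x {n<..} - x n"
      using order_tendstoD(2)[OF summable_LIMSEQ_zero[OF summable], of "subsum x {n<..} - x n"] lt
      by (auto simp: eventually_sequentially)
    then show thesis using that[of "max N (Suc n)"] by simp
  qed
  define p where "p = x n + x m"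
  have "subsum x {n, m} = p"
    using \<open>n < m\<close> by (simp add: p_def subsum_finite)
  obtain B where B: "B \<subseteq> {m<..}" "subsum x B = x m"
    using subsum_tail_surj[of "Suc m" "x m"] kakeya less_imp_le[OF pos] by (auto simp: Suc_tail)
  then have "subsum x (insert n B) = p"
    using \<open>n < m\<close> by (subst subsum_insert) (auto simp: p_def)
  obtain C where C: "C \<subseteq> {n<..}" "subsum x C = p"
    using subsum_tail_surj[of "Suc n" p] kakeya small less_imp_le[OF pos, of n] less_imp_le[OF pos, of m]
    by (auto simp: Suc_tail p_def)
  have reps: "{{n, m}, insert n B, C} \<subseteq> representations x p"
    using \<open>subsum x {n, m} = p\<close> \<open>subsum x (insert n B) = p\<close> C by (simp add: mem_representations_iff)
  have "{n, m} \<noteq> insert n B" "{n, m} \<noteq> C" "insert n B \<noteq> C"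
    using B C \<open>n < m\<close> by (auto simp: set_eq_iff)
  then have "card {{n, m}, insert n B, C} = 3"
    by simp
  moreover have "finite (representations x p)" "card (representations x p) \<le> 2"
    using card_le_2[of p] \<open>subsum x {n, m} = p\<close>
    by (auto simp: achievement_set_eq_range numeral_eq_enat cardinal_function_le_enat_iff)
  ultimately show False
    using card_mono[OF _ reps] by simp
qed

lemma subsum_eq_at_first_difference:
  assumes tail_eq: "\<And>k. x k = subsum x {k<..}"
    and eq: "subsum x A = subsum x B" and "n \<in> A" "n \<notin> B"
    and agree: "\<And>k. k < n \<Longrightarrow> k \<in> A \<longleftrightarrow> k \<in> B"
  shows "A \<subseteq> {..n}" and "{n<..} \<subseteq> B"
proof -
  define P where "P = A \<inter> {..<n}"
  have A_split: "A = insert n (P \<union> (A \<inter> {n<..}))" and B_split: "B = P \<union> (B \<inter> {n<..})"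
    using \<open>n \<in> A\<close> \<open>n \<notin> B\<close> agree by (auto simp: P_def) (metis linorder_neqE_nat)+
  have "subsum x A = x n + subsum x (P \<union> (A \<inter> {n<..}))"
    by (subst A_split, rule subsum_insert) (simp add: P_def)
  also have "\<dots> = x n + subsum x P + subsum x (A \<inter> {n<..})"
    by (subst subsum_Un_disjoint) (auto simp: P_def)
  finally have "subsum x A = x n + subsum x P + subsum x (A \<inter> {n<..})" .
  moreover have "subsum x B = subsum x P + subsum x (B \<inter> {n<..})"
    by (subst B_split, rule subsum_Un_disjoint) (auto simp: P_def)
  moreover have "subsum x (B \<inter> {n<..}) \<le> x n"
    using subsum_mono[of "B \<inter> {n<..}" "{n<..}"] tail_eq[of n] by simp
  ultimately have A_tail: "subsum x (A \<inter> {n<..}) = 0" and B_tail: "subsum x (B \<inter> {n<..}) = x n"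
    using eq subsum_nonneg[of "A \<inter> {n<..}"] by auto
  from A_tail show "A \<subseteq> {..n}"
    by (auto simp: subsum_eq_0_iff not_less)
  show "{n<..} \<subseteq> B"
  proof
    fix j assume j: "j \<in> {n<..}"
    show "j \<in> B"
    proof (rule ccontr)
      assume "j \<notin> B"
      then have "subsum x (B \<inter> {n<..}) + x j \<le> subsum x ({n<..} - {j}) + x j"
        using subsum_mono[of "B \<inter> {n<..}" "{n<..} - {j}"] by auto
      also have "\<dots> = subsum x {n<..}"
        using subsum_insert[of j "{n<..} - {j}"] j by (simp add: insert_absorb)
      finally show False using B_tail tail_eq[of n] pos[of j] by simp
    qed
  qed
qed

lemma finite_iff_infinite_if_subsum_eq:
  assumes tail_eq: "\<And>k. x k = subsum x {k<..}"
    and eq: "subsum x A = subsum x B" and "A \<noteq> B"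
  shows "finite A \<longleftrightarrow> infinite B"
proof -
  have "\<exists>k. k \<in> A \<longleftrightarrow> k \<notin> B" using \<open>A \<noteq> B\<close> by blast
  define n where "n = (LEAST k. k \<in> A \<longleftrightarrow> k \<notin> B)"
  have differ: "n \<in> A \<longleftrightarrow> n \<notin> B"
    unfolding n_def by (rule LeastI_ex) fact
  have agree: "\<And>k. k < n \<Longrightarrow> k \<in> A \<longleftrightarrow> k \<in> B"
    unfolding n_def using not_less_Least by blast
  have finite_infinite: "finite S \<and> infinite T" if "S \<subseteq> {..n}" "{n<..} \<subseteq> T" for S T :: "nat set"
    using that finite_subset infinite_Ioi by blast
  show ?thesis
  proof (cases "n \<in> A")
    case True
    then show ?thesis
      using subsum_eq_at_first_difference[OF tail_eq eq True] differ agree finite_infinite by blast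
  next
    case False
    then show ?thesis
      using subsum_eq_at_first_difference[OF tail_eq eq[symmetric], of n] differ agree finite_infinite
      by blast
  qed
qed

lemma cardinal_function_le_2_if_subsum_Ioi_eq:
  assumes tail_eq: "\<And>k. x k = subsum x {k<..}"
  shows "cardinal_function x p \<le> 2"
proof -
  have inj: "inj_on finite (representations x p)"
  proof (rule inj_onI)
    fix A B assume "A \<in> representations x p" "B \<in> representations x p" "finite A = finite B"
    then show "A = B"
      using finite_iff_infinite_if_subsum_eq[OF tail_eq, of A B] by (auto simp: mem_representations_iff)
  qed
  have "finite (representations x p)"
    using inj_on_finite[OF inj subset_UNIV] by simp
  moreover have "card (representations x p) \<le> card (UNIV :: bool set)"
    using card_inj_on_le[OF inj subset_UNIV] by simp
  ultimately
  show ?thesis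
    by (simp add: cardinal_function_le_enat_iff numeral_eq_enat)
qed

lemma cardinal_function_eq_2_if_subsum_Ioi_eq:
  assumes tail_eq: "\<And>k. x k = subsum x {k<..}"
  shows "cardinal_function x (x k) = 2"
proof -
  have le_2: "finite (representations x (x k))" "card (representations x (x k)) \<le> 2"
    using cardinal_function_le_2_if_subsum_Ioi_eq[OF tail_eq]
    by (simp_all add: cardinal_function_le_enat_iff numeral_eq_enat)
  have "{{k}, {k<..}} \<subseteq> representations x (x k)"
    using tail_eq[of k] by (simp add: mem_representations_iff)
  then have "card {{k}, {k<..}} \<le> card (representations x (x k))"
    by (rule card_mono[OF le_2(1)])
  moreover have "{k} \<noteq> {k<..}" by (metis greaterThan_iff insertI1 less_irrefl)
  ultimately have "card (representations x (x k)) = 2"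
    using le_2(2) by simp
  then show ?thesis using le_2(1) by (simp add: cardinal_function_def numeral_eq_enat)
qed

lemma subsum_Ioi_eq_iff_geometric:
  "(\<forall>n. x n = subsum x {n<..}) \<longleftrightarrow> (\<forall>n. x n = x 0 / 2 ^ n)"
proof
  assume tail_eq: "\<forall>n. x n = subsum x {n<..}"
  have halve: "x (Suc n) = x n / 2" for n
  proof -
    have "{n<..} = insert (Suc n) {Suc n<..}" by auto
    then have "subsum x {n<..} = x (Suc n) + subsum x {Suc n<..}"
      by (simp add: subsum_insert)
    then show ?thesis using tail_eq by simp
  qed
  show "\<forall>n. x n = x 0 / 2 ^ n"
  proof
    fix n show "x n = x 0 / 2 ^ n"
      by (induction n) (simp_all add: halve)
  qed
next
  assume geom: "\<forall>n. x n = x 0 / 2 ^ n"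
  show "\<forall>n. x n = subsum x {n<..}"
  proof
    fix n
    have "(\<lambda>j. x (j + Suc n)) = (\<lambda>j. x n / 2 * (1 / 2) ^ j)"
    proof
      fix j show "x (j + Suc n) = x n / 2 * (1 / 2) ^ j"
        using geom[rule_format, of n] geom[rule_format, of "j + Suc n"]
        by (simp add: power_add power_divide)
    qed
    moreover have "(\<lambda>j. x n / 2 * (1 / 2) ^ j) sums x n"
      using sums_mult[OF geometric_sums[of "1 / 2 :: real"], of "x n / 2"] by simp
    ultimately have "(\<lambda>j. x (j + Suc n)) sums x n" by simp
    then have "(\<lambda>j. if j \<in> {n<..} then x j else 0) sums (x n + (\<Sum>j<Suc n. if j \<in> {n<..} then x j else 0))"
      by (subst sums_iff_shift[symmetric]) simp
    then have "(\<lambda>j. if j \<in> {n<..} then x j else 0) sums x n"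
      by simp
    then show "x n = subsum x {n<..}"
      using sums_subsum sums_unique2 by blast
  qed
qed

end

theorem corollary3p8:
  fixes x :: "nat \<Rightarrow> real"
  assumes pos: "\<And>n. x n > 0"
    and summ: "summable x"
    and noninc: "decseq x"
    and fill: "interval_filling x"
  shows "cardinal_function x ` achievement_set x = {1, 2}
         \<longleftrightarrow> (\<exists>c>0. \<forall>n. x n = c / 2 ^ n)"
proof -
  interpret pos_summable x using pos summ by unfold_locales
  have "cardinal_function x ` achievement_set x = {1, 2} \<longleftrightarrow> (\<forall>n. x n = subsum x {n<..})"
  proof
    assume "cardinal_function x ` achievement_set x = {1, 2}"
    then have "cardinal_function x p \<in> {1, 2}" if "p \<in> achievement_set x" for p
      using that by blast
    then have "cardinal_function x p \<le> 2" if "p \<in> achievement_set x" for p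
      using that by (metis empty_iff insert_iff one_le_numeral order_refl)
    then show "\<forall>n. x n = subsum x {n<..}"
      using subsum_Ioi_eq_if_cardinal_function_le_2[OF noninc fill] by blast
  next
    assume tail_eq: "\<forall>n. x n = subsum x {n<..}"
    have "cardinal_function x p \<in> {1, 2}" if "p \<in> achievement_set x" for p
      using cardinal_function_le_2_if_subsum_Ioi_eq[of p] cardinal_function_nonzero[OF that] tail_eq
      by (cases "cardinal_function x p") (auto simp: one_enat_def numeral_eq_enat zero_enat_def)
    moreover have "0 \<in> achievement_set x" "x 0 \<in> achievement_set x"
      using rangeI[of "subsum x" "{}"] rangeI[of "subsum x" "{0}"] by (simp_all add: achievement_set_eq_range)
    ultimately show "cardinal_function x ` achievement_set x = {1, 2}"
      using cardinal_function_0 cardinal_function_eq_2_if_subsum_Ioi_eq[of 0] tail_eq by force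
  qed
  also have "\<dots> \<longleftrightarrow> (\<forall>n. x n = x 0 / 2 ^ n)"
    by (rule subsum_Ioi_eq_iff_geometric)
  also have "\<dots> \<longleftrightarrow> (\<exists>c>0. \<forall>n. x n = c / 2 ^ n)"
    using pos[of 0] by (metis div_by_1 power_0)
  finally show ?thesis .
qed

end
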